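(* For each fixed $k\geq 3$, $$AW(k;r)\leq \frac{2^{k-2}}{(k-1)!}\,r^{k-1}\,(1+o(1))\quad\text{as } r\to\infty.$$
   Context: A sequence of positive integers $w_1<\dots<w_n$ is an ascending wave if $w_{i+1}-w_i \geq w_i-w_{i-1}$ for $2\le i\le n-1$. For positive integers $k,r$, $AW(k;r)$ denotes the least positive integer $N$ such that every $r$-coloring of $\{1,\dots,N\}$ contains a $k$-term monochromatic ascending wave. *)

theory Defs
  imports Complex_Main
begin

definition ascending_wave :: "(nat \<Rightarrow> nat) \<Rightarrow> nat \<Rightarrow> bool" where
  "ascending_wave w n \<longleftrightarrow>
     (\<forall>i. Suc i < n \<longrightarrow> w i < w (Suc i)) \<and>
     (\<forall>i. i + 2 < n \<longrightarrow> w (Suc i) - w i \<le> w (i + 2) - w (Suc i))"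

definition has_mono_wave :: "nat \<Rightarrow> nat \<Rightarrow> (nat \<Rightarrow> nat) \<Rightarrow> bool" where
  "has_mono_wave k N c \<longleftrightarrow>
     (\<exists>w. ascending_wave w k \<and> (\<forall>i<k. w i \<in> {1..N} \<and> c (w i) = c (w 0)))"

definition AW :: "nat \<Rightarrow> nat \<Rightarrow> nat" where
  "AW k r = (LEAST N. 0 < N \<and>
      (\<forall>c :: nat \<Rightarrow> nat. (\<forall>x\<in>{1..N}. c x < r) \<longrightarrow> has_mono_wave k N c))"

end

theory Submission
  imports Defs
begin

text \<open>Call N good for k waves and r colours if every colouring of a block of N consecutive
  integers that uses at most r colours contains a monochromatic k-term ascending wave.
  Split a block of length 2M + L, with M good for k waves and r + 1 colours and L good for k + 1
  waves and r colours, into a first part of length M, a gap of length M and a last part of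
  length L. The first part contains a monochromatic k-wave; since its last two terms lie in the
  first part, every y in the last part exceeds its last term by at least its last difference.
  So either the wave's colour occurs in the last part, and the wave extends to y, or the last
  part uses at most r colours and contains a (k + 1)-wave. The numbers
  2^(k-2) binom(r+k-1, k-1) satisfy exactly this recurrence (Pascal's rule), and
  binom(n, m) \<le> n^m / m! gives the asymptotic form.\<close>

definition forces_mono_wave :: "nat \<Rightarrow> nat \<Rightarrow> nat \<Rightarrow> bool" where
  "forces_mono_wave k r N \<longleftrightarrow>
     (\<forall>a (c :: nat \<Rightarrow> nat). card (c ` {a<..a + N}) \<le> r \<longrightarrow>
        (\<exists>w. ascending_wave w k \<and> (\<forall>i<k. w i \<in> {a<..a + N} \<and> c (w i) = c (w 0))))"

lemma forces_mono_wave_no_colours: "0 < N \<Longrightarrow> forces_mono_wave k 0 N"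
  unfolding forces_mono_wave_def by auto

lemma forces_mono_wave_two: "forces_mono_wave 2 r (Suc r)"
  unfolding forces_mono_wave_def
proof (intro allI impI)
  fix a :: nat and c :: "nat \<Rightarrow> nat"
  assume "card (c ` {a<..a + Suc r}) \<le> r"
  then have "\<not> inj_on c {a<..a + Suc r}"
    by (intro pigeonhole) simp
  then obtain x y where xy: "x \<in> {a<..a + Suc r}" "y \<in> {a<..a + Suc r}" "x < y" "c x = c y"
    unfolding inj_on_def by (metis linorder_neqE_nat)
  let ?w = "\<lambda>i::nat. if i = 0 then x else y"
  have "ascending_wave ?w 2"
    using xy unfolding ascending_wave_def by auto
  moreover have "\<forall>i<2. ?w i \<in> {a<..a + Suc r} \<and> c (?w i) = c (?w 0)"
    using xy by auto
  ultimately show "\<exists>w. ascending_wave w 2 \<and> (\<forall>i<2. w i \<in> {a<..a + Suc r} \<and> c (w i) = c (w 0))"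
    by blast
qed

lemma ascending_wave_extend:
  assumes w: "ascending_wave w k" and k: "2 \<le> k" and y: "2 * w (k-1) \<le> w (k-2) + y"
  shows "ascending_wave (w(k := y)) (Suc k)"
proof -
  have incr: "\<And>i. Suc i < k \<Longrightarrow> w i < w (Suc i)"
    and convex: "\<And>i. i + 2 < k \<Longrightarrow> w (Suc i) - w i \<le> w (i + 2) - w (Suc i)"
    using w unfolding ascending_wave_def by auto
  have "w (k-2) < w (k-1)"
    using incr[of "k-2"] k by (simp add: Suc_diff_Suc numeral_2_eq_2)
  with y have last: "w (k-1) < y" "w (k-1) - w (k-2) \<le> y - w (k-1)" by linarith+
  show ?thesis
    unfolding ascending_wave_def
  proof (intro conjI allI impI)
    fix i assume "Suc i < Suc k"
    then consider "Suc i = k" | "Suc i < k" by linarith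
    then show "(w(k := y)) i < (w(k := y)) (Suc i)"
      by cases (use last incr in auto)
  next
    fix i assume "i + 2 < Suc k"
    then consider "i + 2 = k" | "i + 2 < k" by linarith
    then show "(w(k := y)) (Suc i) - (w(k := y)) i \<le> (w(k := y)) (i + 2) - (w(k := y)) (Suc i)"
    proof cases
      case 1
      then have "i = k - 2" "Suc i = k - 1" by auto
      then show ?thesis using 1 last by auto
    qed (use convex in auto)
  qed
qed

lemma forces_mono_wave_step:
  assumes k: "2 \<le> k"
    and M: "forces_mono_wave k (Suc r) M" and L: "forces_mono_wave (Suc k) r L"
  shows "forces_mono_wave (Suc k) (Suc r) (2 * M + L)"
  unfolding forces_mono_wave_def
proof (intro allI impI)
  fix a :: nat and c :: "nat \<Rightarrow> nat"
  let ?I = "{a<..a + (2 * M + L)}" and ?J = "{a + 2 * M<..a + 2 * M + L}"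
  assume colours: "card (c ` ?I) \<le> Suc r"
  have "card (c ` {a<..a + M}) \<le> card (c ` ?I)"
    by (intro card_mono image_mono) auto
  with colours have "card (c ` {a<..a + M}) \<le> Suc r" by linarith
  with M obtain w where w: "ascending_wave w k"
    and w_in: "\<forall>i<k. w i \<in> {a<..a + M} \<and> c (w i) = c (w 0)"
    unfolding forces_mono_wave_def by blast
  have w_block: "w i \<in> {a<..a + M}" and w_colour: "c (w i) = c (w 0)" if "i < k" for i
    using w_in that by blast+
  show "\<exists>w. ascending_wave w (Suc k) \<and> (\<forall>i<Suc k. w i \<in> ?I \<and> c (w i) = c (w 0))"
  proof (cases "c (w 0) \<in> c ` ?J")
    case True
    then obtain y where y: "y \<in> ?J" "c y = c (w 0)" by (metis imageE)
    have "w (k-1) \<le> a + M" "a < w (k-2)"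
      using w_block[of "k-1"] w_block[of "k-2"] k by auto
    with y(1) have "2 * w (k-1) \<le> w (k-2) + y" by simp
    then have "ascending_wave (w(k := y)) (Suc k)"
      using ascending_wave_extend[OF w k] by blast
    moreover have "(w(k := y)) i \<in> ?I \<and> c ((w(k := y)) i) = c ((w(k := y)) 0)"
      if "i < Suc k" for i
    proof (cases "i = k")
      case True
      with y k show ?thesis by simp
    next
      case False
      with that have "i < k" by simp
      with False w_block[of i] w_colour[of i] show ?thesis by simp
    qed
    ultimately show ?thesis by blast
  next
    case False
    have "?J \<subseteq> ?I" by auto
    with False have "c ` ?J \<subseteq> c ` ?I - {c (w 0)}" by blast
    then have "card (c ` ?J) \<le> card (c ` ?I - {c (w 0)})" by (intro card_mono) auto
    moreover have "w 0 \<in> ?I" using w_block[of 0] k by simp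
    ultimately have "card (c ` ?J) \<le> r" using colours by (simp add: card_Diff_singleton)
    with L obtain v where "ascending_wave v (Suc k)"
      "\<forall>i<Suc k. v i \<in> ?J \<and> c (v i) = c (v 0)"
      unfolding forces_mono_wave_def by blast
    with \<open>?J \<subseteq> ?I\<close> show ?thesis by blast
  qed
qed


definition wave_bound :: "nat \<Rightarrow> nat \<Rightarrow> nat" where
  "wave_bound k r = 2 ^ (k - 2) * ((r + k - 1) choose (k - 1))"

lemma wave_bound_pos: "0 < wave_bound k r"
  by (simp add: wave_bound_def)

lemma wave_bound_two: "wave_bound 2 r = Suc r"
  by (simp add: wave_bound_def)

lemma wave_bound_Suc_Suc:
  assumes "2 \<le> k"
  shows "wave_bound (Suc k) (Suc r) = 2 * wave_bound k (Suc r) + wave_bound (Suc k) r"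
proof -
  obtain j where "k = Suc (Suc j)" using assms by (metis add_2_eq_Suc le_Suc_ex)
  then show ?thesis by (simp add: wave_bound_def algebra_simps)
qed

lemma forces_mono_wave_wave_bound:
  "2 \<le> k \<Longrightarrow> forces_mono_wave k r (wave_bound k r)"
proof (induction k arbitrary: r rule: nat_induct_at_least)
  case base
  show ?case using forces_mono_wave_two by (simp add: wave_bound_two)
next
  case (Suc k)
  note forces_k = Suc.IH
  show ?case
  proof (induction r)
    case 0
    show ?case using wave_bound_pos by (rule forces_mono_wave_no_colours)
  next
    case (Suc r)
    show ?case
      using forces_mono_wave_step[OF \<open>2 \<le> k\<close> forces_k Suc.IH] wave_bound_Suc_Suc[OF \<open>2 \<le> k\<close>]
      by simp
  qed
qed

lemma AW_le_if_forces_mono_wave: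
  assumes "0 < N" and forces: "forces_mono_wave k r N"
  shows "AW k r \<le> N"
proof -
  have "has_mono_wave k N c" if "\<forall>x\<in>{1..N}. c x < r" for c :: "nat \<Rightarrow> nat"
  proof -
    have block: "{0<..0 + N} = {1..N}" by auto
    have "c ` {1..N} \<subseteq> {..<r}" using that by auto
    then have "card (c ` {0<..0 + N}) \<le> r"
      unfolding block using card_mono[of "{..<r}"] by fastforce
    with forces obtain w where "ascending_wave w k"
      "\<forall>i<k. w i \<in> {0<..0 + N} \<and> c (w i) = c (w 0)"
      unfolding forces_mono_wave_def by blast
    then show ?thesis unfolding has_mono_wave_def block by blast
  qed
  with \<open>0 < N\<close> show ?thesis
    unfolding AW_def by (intro Least_le) blast
qed

lemma AW_le_wave_bound: "2 \<le> k \<Longrightarrow> AW k r \<le> wave_bound k r"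
  by (intro AW_le_if_forces_mono_wave wave_bound_pos forces_mono_wave_wave_bound)

lemma wave_bound_le_power:
  assumes "2 \<le> k"
  shows "real (wave_bound k r) \<le> 2 ^ (k - 2) / fact (k - 1) * (real r + real (k - 1)) ^ (k - 1)"
proof -
  have "real ((r + k - 1) choose (k - 1)) * fact (k - 1) \<le> real (r + k - 1) ^ (k - 1)"
    using binomial_fact_pow[of "r + k - 1" "k - 1"]
    by (metis of_nat_fact of_nat_le_iff of_nat_mult of_nat_power)
  moreover have "real (r + k - 1) = real r + real (k - 1)" using assms by simp
  ultimately show ?thesis
    by (simp add: wave_bound_def field_simps)
qed

lemma eventually_shifted_power_le:
  fixes c \<epsilon> :: real
  assumes "0 < \<epsilon>"
  shows "eventually (\<lambda>r. (real r + c) ^ m \<le> real r ^ m * (1 + \<epsilon>)) sequentially"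
proof -
  have "(\<lambda>r. (1 + c / real r) ^ m) \<longlonglongrightarrow> (1 + 0) ^ m"
    by (intro tendsto_intros lim_const_over_n)
  then have "eventually (\<lambda>r. (1 + c / real r) ^ m < 1 + \<epsilon>) sequentially"
    using assms by (intro order_tendstoD(2)) auto
  with eventually_gt_at_top[of 0]
  show ?thesis
  proof eventually_elim
    case (elim r)
    then have "real r + c = real r * (1 + c / real r)" by (simp add: field_simps)
    then have "(real r + c) ^ m = real r ^ m * (1 + c / real r) ^ m"
      by (simp add: power_mult_distrib)
    with elim(2) show ?case
      by (simp add: mult_left_mono)
  qed
qed

theorem corollary1p5:
  fixes k :: nat
  assumes "k \<ge> 3"
  shows "\<forall>\<epsilon>>0. eventually (\<lambda>r. real (AW k r)
           \<le> 2 ^ (k - 2) / fact (k - 1) * real r ^ (k - 1) * (1 + \<epsilon>)) sequentially"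
proof (intro allI impI)
  fix \<epsilon> :: real
  assume "0 < \<epsilon>"
  from assms have k: "2 \<le> k" by simp
  let ?C = "2 ^ (k - 2) / fact (k - 1) :: real"
  from eventually_shifted_power_le[OF \<open>0 < \<epsilon>\<close>, of "real (k - 1)" "k - 1"]
  show "eventually (\<lambda>r. real (AW k r) \<le> ?C * real r ^ (k - 1) * (1 + \<epsilon>)) sequentially"
  proof eventually_elim
    case (elim r)
    have "real (AW k r) \<le> real (wave_bound k r)"
      using AW_le_wave_bound[OF k] by simp
    also have "\<dots> \<le> ?C * (real r + real (k - 1)) ^ (k - 1)"
      using k by (rule wave_bound_le_power)
    also have "\<dots> \<le> ?C * (real r ^ (k - 1) * (1 + \<epsilon>))"
      using elim by (intro mult_left_mono) simp_all
    finally show ?case by (simp only: mult.assoc)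
  qed
qed

end
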